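(* Let $A_1,\dots,A_m$ be open subsets of $\mathbb{R}^d$. Assume that each $A_i$ is a homology cell and that the union of any at most $d$ of them is a homology cell. Then $\bigcap_{i=1}^m A_i$ is either empty or a homology cell.
   Context: A topological space $X$ is a homology cell if it is nonempty and all its reduced singular homology groups (with integer coefficients) vanish, i.e. $\tilde H_i(X)=0$ for all $i$. *)

theory Defs
  imports "HOL-Analysis.Analysis" "HOL-Homology.Homology"
begin

definition homology_cell :: "'a topology \<Rightarrow> bool" where
  "homology_cell X \<longleftrightarrow> topspace X \<noteq> {} \<and> (\<forall>p. trivial_group (reduced_homology_group p X))"

end

theory Submission
  imports Defs
begin

text \<open>Induct on the number of sets. Writing \<open>B\<close> for the intersection of all sets but \<open>A\<^sub>0\<close>,
Mayer--Vietoris shows that \<open>H\<^sub>p(B \<inter> A\<^sub>0)\<close> vanishes as soon as \<open>H\<^sub>p(B)\<close>, \<open>H\<^sub>p(A\<^sub>0)\<close> and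
\<open>H\<^sub>p\<^sub>+\<^sub>1(B \<union> A\<^sub>0)\<close> do; and \<open>B \<union> A\<^sub>0\<close> is the intersection of the smaller family \<open>A\<^sub>i \<union> A\<^sub>0\<close>,
whose unions of at most \<open>k - 1\<close> members are unions of at most \<open>k\<close> original sets. So each
step trades one unit of the allowed union size for one homological degree, and after \<open>d\<close> steps
all that is needed is that an open subset of \<open>\<real>\<^sup>d\<close> has no homology in degrees \<open>\<ge> d\<close>.

That last fact is proved by compactness: a cycle lies in a finite union of open boxes inside
the set, and a finite union of boxes which differ only in a set \<open>D\<close> of coordinates has no
reduced homology in degrees \<open>\<ge> |D|\<close>. For the latter, cut the union along the second largest
endpoint \<open>c\<^sub>1\<close> in one coordinate \<open>i \<in> D\<close>: the part below \<open>c\<^sub>1\<close> has fewer endpoints, and all other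
pieces and overlaps are unions of boxes with a common \<open>i\<close>-th side, i.e. differ only in \<open>D - {i}\<close>.\<close>

section \<open>Mayer--Vietoris for open sets\<close>

lemma trivial_group_exact_seq_middle:
  assumes "exact_seq ([G1, G2, G3], [f, g])" "trivial_group G1" "trivial_group G3"
  shows "trivial_group G2"
proof -
  have f: "f \<in> hom G2 G1" and g: "group_hom G3 G2 g" and "group G2"
    and ker: "kernel G2 G1 f = g ` carrier G3"
    using assms(1) by (auto simp: group_hom_def)
  have "carrier G2 = kernel G2 G1 f"
    using f assms(2) by (auto simp: kernel_def trivial_group_def hom_def)
  also have "\<dots> = {\<one>\<^bsub>G2\<^esub>}"
    using ker assms(3) g by (simp add: trivial_group_def group_hom.hom_one)
  finally show ?thesis
    using \<open>group G2\<close> by (simp add: trivial_group_def)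
qed

lemma trivial_relative_homology_group_from_reduced:
  assumes "topspace X \<inter> S \<noteq> {}"
    and "trivial_group (reduced_homology_group p X)"
    and "trivial_group (reduced_homology_group (p - 1) (subtopology X S))"
  shows "trivial_group (relative_homology_group p X S)"
  using trivial_group_exact_seq_middle[OF homology_exactness_reduced_1[OF assms(1)]] assms(2,3)
  by simp

lemma trivial_reduced_homology_group_subtopology_from_relative:
  assumes "trivial_group (relative_homology_group p X S)"
    and "trivial_group (reduced_homology_group (p - 1) X)"
  shows "trivial_group (reduced_homology_group (p - 1) (subtopology X S))"
  using trivial_group_exact_seq_middle[OF homology_exactness_reduced_2] assms by blast

lemma trivial_reduced_homology_group_from_relative:
  assumes "trivial_group (relative_homology_group p X S)"
    and "trivial_group (reduced_homology_group p (subtopology X S))"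
  shows "trivial_group (reduced_homology_group p X)"
  using trivial_group_exact_seq_middle[OF homology_exactness_reduced_3] assms by blast

lemma trivial_relative_homology_group_excision_open:
  fixes U V :: "'a::topological_space set"
  assumes "open U" "open V"
  shows "trivial_group (relative_homology_group p (top_of_set U) (U \<inter> V))
     \<longleftrightarrow> trivial_group (relative_homology_group p (top_of_set (U \<union> V)) V)"
proof -
  let ?X = "top_of_set (U \<union> V)"
  have "closedin ?X (V - U)"
    using \<open>open U\<close> by (auto simp: closedin_closed intro!: exI[of _ "- U"])
  then have "?X closure_of (V - U) = V - U"
    by (simp add: closure_of_eq)
  moreover have "?X interior_of V = V"
    using \<open>open V\<close> by (intro interior_of_openin) (auto simp: openin_open)
  ultimately have iso: "hom_induced p (subtopology ?X ((U \<union> V) - (V - U))) (V - (V - U))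
                     (subtopology ?X (U \<union> V)) V id
      \<in> iso (relative_homology_group p (subtopology ?X ((U \<union> V) - (V - U))) (V - (V - U)))
            (relative_homology_group p (subtopology ?X (U \<union> V)) V)"
    by (intro homology_excision_axiom) auto
  have "(U \<union> V) \<inter> ((U \<union> V) - (V - U)) = U" "V - (V - U) = U \<inter> V" by blast+
  then have "relative_homology_group p (top_of_set U) (U \<inter> V) \<cong> relative_homology_group p ?X V"
    using is_isoI[OF iso] by (simp add: subtopology_subtopology)
  then show ?thesis
    by (rule isomorphic_group_triviality) simp_all
qed

lemma trivial_reduced_homology_group_Int_open:
  fixes U V :: "'a::topological_space set"
  assumes "open U" "open V"
    and "trivial_group (reduced_homology_group p (top_of_set U))"
    and "trivial_group (reduced_homology_group p (top_of_set V))"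
    and "trivial_group (reduced_homology_group (p + 1) (top_of_set (U \<union> V)))"
  shows "trivial_group (reduced_homology_group p (top_of_set (U \<inter> V)))"
proof (cases "U \<inter> V = {}")
  case True
  then show ?thesis by (simp add: trivial_reduced_homology_group_empty)
next
  case False
  have "trivial_group (relative_homology_group (p + 1) (top_of_set (U \<union> V)) V)"
    using False assms(4,5)
    by (intro trivial_relative_homology_group_from_reduced) (auto simp: subtopology_subtopology Int_absorb1)
  then have "trivial_group (relative_homology_group (p + 1) (top_of_set U) (U \<inter> V))"
    using trivial_relative_homology_group_excision_open[OF assms(1,2)] by blast
  from trivial_reduced_homology_group_subtopology_from_relative[OF this] assms(3)
  show ?thesis
    by (simp add: subtopology_subtopology flip: Int_assoc)
qed

lemma trivial_reduced_homology_group_Un_open: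
  fixes U V :: "'a::topological_space set"
  assumes "open U" "open V" "p \<noteq> 0"
    and "trivial_group (reduced_homology_group p (top_of_set U))"
    and "trivial_group (reduced_homology_group p (top_of_set V))"
    and "trivial_group (reduced_homology_group (p - 1) (top_of_set (U \<inter> V)))"
  shows "trivial_group (reduced_homology_group p (top_of_set (U \<union> V)))"
proof -
  have "trivial_group (relative_homology_group p (top_of_set U) (U \<inter> V))"
  proof (cases "U \<inter> V = {}")
    case True
    then show ?thesis
      using assms(4) by (simp add: un_reduced_homology_group[OF \<open>p \<noteq> 0\<close>])
  next
    case False
    then show ?thesis
      using assms(4,6)
      by (intro trivial_relative_homology_group_from_reduced) (simp_all add: subtopology_subtopology flip: Int_assoc)
  qed
  then have "trivial_group (relative_homology_group p (top_of_set (U \<union> V)) V)"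
    using trivial_relative_homology_group_excision_open[OF assms(1,2)] by blast
  moreover have "subtopology (top_of_set (U \<union> V)) V = top_of_set V"
    by (simp add: subtopology_subtopology Int_absorb1)
  ultimately show ?thesis
    using assms(5) trivial_reduced_homology_group_from_relative by metis
qed

section \<open>Finite unions of open boxes\<close>

definition box_union :: "((real^'n) \<times> (real^'n)) set \<Rightarrow> (real^'n) set" where
  "box_union F = (\<Union>(a, b)\<in>F. box a b)"

definition proper_boxes :: "((real^'n) \<times> (real^'n)) set \<Rightarrow> bool" where
  "proper_boxes F \<longleftrightarrow> (\<forall>(a, b)\<in>F. \<forall>k. a$k < b$k)"

definition boxes_vary_only_in :: "'n set \<Rightarrow> ((real^'n) \<times> (real^'n)) set \<Rightarrow> bool" where
  "boxes_vary_only_in D F \<longleftrightarrow>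
     (\<forall>(a, b)\<in>F. \<forall>(a', b')\<in>F. \<forall>k. k \<notin> D \<longrightarrow> a$k = a'$k \<and> b$k = b'$k)"

definition box_ends :: "((real^'n) \<times> (real^'n)) set \<Rightarrow> 'n \<Rightarrow> real set" where
  "box_ends F i = (\<lambda>(a, b). a$i) ` F \<union> (\<lambda>(a, b). b$i) ` F"

definition cart_upd :: "real^'n \<Rightarrow> 'n \<Rightarrow> real \<Rightarrow> real^'n" where
  "cart_upd v i t = (\<chi> k. if k = i then t else v$k)"

definition slab_boxes :: "((real^'n) \<times> (real^'n)) set \<Rightarrow> 'n \<Rightarrow> real \<Rightarrow> real \<Rightarrow> ((real^'n) \<times> (real^'n)) set"
  where "slab_boxes F i \<alpha> \<beta> = (\<lambda>(a, b). (cart_upd a i \<alpha>, cart_upd b i \<beta>)) ` F"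

lemma cart_upd_nth [simp]: "cart_upd v i t $ k = (if k = i then t else v$k)"
  by (simp add: cart_upd_def)

lemma open_box_union: "open (box_union F)"
  unfolding box_union_def by (auto intro!: open_UN open_box)

lemma mem_box_union:
  "x \<in> box_union F \<longleftrightarrow> (\<exists>a b. (a, b) \<in> F \<and> (\<forall>k. a$k < x$k \<and> x$k < b$k))"
  unfolding box_union_def by (fastforce simp: mem_box_cart)

lemma mem_box_union_slab_boxes:
  "x \<in> box_union (slab_boxes F i \<alpha> \<beta>) \<longleftrightarrow>
     (\<exists>a b. (a, b) \<in> F \<and> (\<forall>k. k \<noteq> i \<longrightarrow> a$k < x$k \<and> x$k < b$k) \<and> \<alpha> < x$i \<and> x$i < \<beta>)"
  unfolding mem_box_union slab_boxes_def by (force split: if_splits)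

lemma box_unionI: "(a, b) \<in> F \<Longrightarrow> (\<And>k. a$k < x$k \<and> x$k < b$k) \<Longrightarrow> x \<in> box_union F"
  unfolding mem_box_union by blast

lemma box_unionE:
  assumes "x \<in> box_union F"
  obtains a b where "(a, b) \<in> F" "\<And>k. a$k < x$k \<and> x$k < b$k"
  using assms unfolding mem_box_union by blast

lemma box_union_slab_boxesI:
  "(a, b) \<in> F \<Longrightarrow> (\<And>k. k \<noteq> i \<Longrightarrow> a$k < x$k \<and> x$k < b$k) \<Longrightarrow> \<alpha> < x$i \<Longrightarrow> x$i < \<beta>
    \<Longrightarrow> x \<in> box_union (slab_boxes F i \<alpha> \<beta>)"
  unfolding mem_box_union_slab_boxes by blast

lemma box_union_slab_boxesE:
  assumes "x \<in> box_union (slab_boxes F i \<alpha> \<beta>)"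
  obtains a b where "(a, b) \<in> F" "\<And>k. k \<noteq> i \<Longrightarrow> a$k < x$k \<and> x$k < b$k" "\<alpha> < x$i" "x$i < \<beta>"
  using assms unfolding mem_box_union_slab_boxes by blast

lemma proper_boxesD: "proper_boxes F \<Longrightarrow> (a, b) \<in> F \<Longrightarrow> a$k < b$k"
  by (auto simp: proper_boxes_def)

lemma boxes_vary_only_inD:
  "boxes_vary_only_in D F \<Longrightarrow> (a, b) \<in> F \<Longrightarrow> (a', b') \<in> F \<Longrightarrow> k \<notin> D \<Longrightarrow> a$k = a'$k \<and> b$k = b'$k"
  unfolding boxes_vary_only_in_def by fast

lemma proper_boxes_subset: "proper_boxes F \<Longrightarrow> G \<subseteq> F \<Longrightarrow> proper_boxes G"
  by (auto simp: proper_boxes_def)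

lemma boxes_vary_only_in_subset: "boxes_vary_only_in D F \<Longrightarrow> G \<subseteq> F \<Longrightarrow> boxes_vary_only_in D G"
  unfolding boxes_vary_only_in_def by blast

lemma box_endsI: "(a, b) \<in> F \<Longrightarrow> a$i \<in> box_ends F i \<and> b$i \<in> box_ends F i"
  unfolding box_ends_def by force

lemma finite_box_ends: "finite F \<Longrightarrow> finite (box_ends F i)"
  by (simp add: box_ends_def)

lemma finite_slab_boxes: "finite F \<Longrightarrow> finite (slab_boxes F i \<alpha> \<beta>)"
  by (simp add: slab_boxes_def)

lemma proper_slab_boxes: "proper_boxes F \<Longrightarrow> \<alpha> < \<beta> \<Longrightarrow> proper_boxes (slab_boxes F i \<alpha> \<beta>)"
  by (auto simp: proper_boxes_def slab_boxes_def)

lemma boxes_vary_only_in_slab_boxes: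
  "boxes_vary_only_in D F \<Longrightarrow> boxes_vary_only_in (D - {i}) (slab_boxes F i \<alpha> \<beta>)"
  unfolding boxes_vary_only_in_def slab_boxes_def by (clarsimp; blast)

lemma trivial_reduced_homology_group_box_union_single:
  assumes "boxes_vary_only_in {} F"
  shows "trivial_group (reduced_homology_group p (top_of_set (box_union F)))"
proof -
  have "box_union F = {} \<or> (\<exists>a b. box_union F = box a b)"
  proof (cases "F = {}")
    case False
    then obtain a b where ab: "(a, b) \<in> F" by auto
    have "a' = a \<and> b' = b" if "(a', b') \<in> F" for a' b'
      using boxes_vary_only_inD[OF assms that ab] by (simp add: vec_eq_iff)
    then have "box_union F = box a b"
      using ab unfolding box_union_def by fast
    then show ?thesis by blast
  qed (simp add: box_union_def)
  then have "convex (box_union F)"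
    by auto
  then show ?thesis
    by (simp add: convex_imp_contractible trivial_reduced_homology_group_contractible_space)
qed

lemma boxes_vary_only_in_Diff_if_two_ends:
  assumes "boxes_vary_only_in D F" "proper_boxes F" "finite F" "card (box_ends F i) \<le> 2"
  shows "boxes_vary_only_in (D - {i}) F"
  unfolding boxes_vary_only_in_def
proof (clarify)
  fix a b a' b' k
  assume ab: "(a, b) \<in> F" and ab': "(a', b') \<in> F" and k: "k \<notin> D - {i}"
  have "box_ends F i = {a$i, b$i}"
  proof (rule card_subset_eq[symmetric])
    show "finite (box_ends F i)" using \<open>finite F\<close> by (rule finite_box_ends)
    show "{a$i, b$i} \<subseteq> box_ends F i" using ab unfolding box_ends_def by force
    show "card {a$i, b$i} = card (box_ends F i)"
      using assms(4) proper_boxesD[OF assms(2) ab, of i] card_mono[OF \<open>finite (box_ends F i)\<close> \<open>{a$i, b$i} \<subseteq> box_ends F i\<close>]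
      by simp
  qed
  then have "a'$i \<in> {a$i, b$i}" "b'$i \<in> {a$i, b$i}"
    using ab' unfolding box_ends_def by force+
  then have "a'$i = a$i \<and> b'$i = b$i"
    using proper_boxesD[OF assms(2) ab, of i] proper_boxesD[OF assms(2) ab', of i] by auto
  then show "a$k = a'$k \<and> b$k = b'$k"
    using boxes_vary_only_inD[OF assms(1) ab ab', of k] k by (cases "k = i") auto
qed

lemma slab_boxes_bounds:
  "x \<in> box_union (slab_boxes G i \<alpha> \<beta>) \<Longrightarrow> \<alpha> < x$i \<and> x$i < \<beta>"
  by (auto elim: box_union_slab_boxesE)

lemma box_union_slab_boxes_rebound:
  "x \<in> box_union (slab_boxes G i \<alpha> \<beta>) \<Longrightarrow> \<alpha>' < x$i \<Longrightarrow> x$i < \<beta>'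
    \<Longrightarrow> x \<in> box_union (slab_boxes G i \<alpha>' \<beta>')"
  by (erule box_union_slab_boxesE) (rule box_union_slab_boxesI)

text \<open>\<open>c0 > c1 > c2\<close> are the three largest endpoints of the boxes of \<open>F\<close> in direction \<open>i\<close>.\<close>

locale box_split =
  fixes F :: "((real^'n) \<times> (real^'n)) set" and i :: 'n and c0 c1 c2 :: real
  assumes c2_less_c1: "c2 < c1" and c1_less_c0: "c1 < c0"
    and left_le_c1: "\<And>a b. (a, b) \<in> F \<Longrightarrow> a$i \<le> c1"
    and left_less_c1: "\<And>a b. (a, b) \<in> F \<Longrightarrow> a$i < c1 \<Longrightarrow> a$i \<le> c2"
    and right_greater_c1: "\<And>a b. (a, b) \<in> F \<Longrightarrow> c1 < b$i \<Longrightarrow> b$i = c0"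
begin

definition lower_boxes :: "((real^'n) \<times> (real^'n)) set" where
  "lower_boxes = (\<lambda>(a, b). (a, cart_upd b i (min (b$i) c1))) ` {(a, b) \<in> F. a$i < c1}"

definition crossing_boxes :: "((real^'n) \<times> (real^'n)) set" where
  "crossing_boxes = {(a, b) \<in> F. a$i < c1 \<and> c1 < b$i}"

definition upper_boxes :: "((real^'n) \<times> (real^'n)) set" where
  "upper_boxes = {(a, b) \<in> F. c1 < b$i}"

lemma box_union_lower_boxes: "box_union lower_boxes = box_union F \<inter> {x. x$i < c1}"
proof (intro equalityI subsetI)
  fix x assume "x \<in> box_union lower_boxes"
  then obtain a b where ab: "(a, b) \<in> F"
    and x: "\<And>k. a$k < x$k \<and> x$k < cart_upd b i (min (b$i) c1) $ k"
    unfolding lower_boxes_def by (auto elim!: box_unionE)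
  have "a$k < x$k \<and> x$k < b$k" for k
    using x[of k] by (auto split: if_splits)
  then have "x \<in> box_union F"
    by (rule box_unionI[OF ab])
  moreover have "x$i < c1"
    using x[of i] by simp
  ultimately show "x \<in> box_union F \<inter> {x. x$i < c1}"
    by simp
next
  fix x assume "x \<in> box_union F \<inter> {x. x$i < c1}"
  then obtain a b where ab: "(a, b) \<in> F" and x: "\<And>k. a$k < x$k \<and> x$k < b$k" and "x$i < c1"
    by (auto elim: box_unionE)
  then have "(a, cart_upd b i (min (b$i) c1)) \<in> lower_boxes"
    unfolding lower_boxes_def by (force intro: less_trans)
  then show "x \<in> box_union lower_boxes"
    by (rule box_unionI) (use x \<open>x$i < c1\<close> in auto)
qed

lemma box_union_upper_slab: "box_union (slab_boxes upper_boxes i c1 c0) = box_union F \<inter> {x. c1 < x$i}"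
proof (intro equalityI subsetI)
  fix x assume "x \<in> box_union (slab_boxes upper_boxes i c1 c0)"
  then obtain a b where ab: "(a, b) \<in> F" "c1 < b$i"
    and x: "\<And>k. k \<noteq> i \<Longrightarrow> a$k < x$k \<and> x$k < b$k" "c1 < x$i" "x$i < c0"
    unfolding upper_boxes_def by (auto elim!: box_union_slab_boxesE)
  have "a$i < x$i" "x$i < b$i"
    using left_le_c1[OF ab(1)] right_greater_c1[OF ab] x by auto
  then have "x \<in> box_union F"
    using x by (intro box_unionI[OF ab(1)]) (metis (full_types))
  then show "x \<in> box_union F \<inter> {x. c1 < x$i}"
    using x by simp
next
  fix x assume "x \<in> box_union F \<inter> {x. c1 < x$i}"
  then obtain a b where ab: "(a, b) \<in> F" and x: "\<And>k. a$k < x$k \<and> x$k < b$k" and "c1 < x$i"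
    by (auto elim: box_unionE)
  then have upper: "(a, b) \<in> upper_boxes" and "b$i = c0"
    using right_greater_c1[OF ab] unfolding upper_boxes_def by (auto intro: less_trans)
  show "x \<in> box_union (slab_boxes upper_boxes i c1 c0)"
    by (rule box_union_slab_boxesI[OF upper]) (use x \<open>c1 < x$i\<close> \<open>b$i = c0\<close> in auto)
qed

lemma box_union_crossing_slab_subset:
  assumes "c2 \<le> \<alpha>" "\<beta> \<le> c0"
  shows "box_union (slab_boxes crossing_boxes i \<alpha> \<beta>) \<subseteq> box_union F"
proof
  fix x assume "x \<in> box_union (slab_boxes crossing_boxes i \<alpha> \<beta>)"
  then obtain a b where ab: "(a, b) \<in> F" "a$i < c1" "c1 < b$i"
    and x: "\<And>k. k \<noteq> i \<Longrightarrow> a$k < x$k \<and> x$k < b$k" "\<alpha> < x$i" "x$i < \<beta>"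
    unfolding crossing_boxes_def by (auto elim!: box_union_slab_boxesE)
  have "a$i < x$i" "x$i < b$i"
    using left_less_c1[OF ab(1,2)] right_greater_c1[OF ab(1,3)] x assms by auto
  then show "x \<in> box_union F"
    using x by (intro box_unionI[OF ab(1)]) (metis (full_types))
qed


lemma box_union_lower_Int_crossing:
  "box_union lower_boxes \<inter> box_union (slab_boxes crossing_boxes i c2 c0)
     = box_union (slab_boxes crossing_boxes i c2 c1)"
proof (intro equalityI subsetI)
  fix x assume x: "x \<in> box_union lower_boxes \<inter> box_union (slab_boxes crossing_boxes i c2 c0)"
  then have "c2 < x$i" "x$i < c1"
    using slab_boxes_bounds box_union_lower_boxes by blast+
  with x show "x \<in> box_union (slab_boxes crossing_boxes i c2 c1)"
    by (blast intro: box_union_slab_boxes_rebound)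
next
  fix x assume x: "x \<in> box_union (slab_boxes crossing_boxes i c2 c1)"
  then have "c2 < x$i" "x$i < c1"
    using slab_boxes_bounds by blast+
  then have "x \<in> box_union (slab_boxes crossing_boxes i c2 c0)"
    using x c1_less_c0 by (auto intro: box_union_slab_boxes_rebound)
  moreover have "x \<in> box_union lower_boxes"
    using calculation box_union_crossing_slab_subset[of c2 c0] \<open>x$i < c1\<close>
    by (auto simp: box_union_lower_boxes)
  ultimately show "x \<in> box_union lower_boxes \<inter> box_union (slab_boxes crossing_boxes i c2 c0)"
    by blast
qed

lemma box_union_lower_crossing_Int_upper:
  "(box_union lower_boxes \<union> box_union (slab_boxes crossing_boxes i c2 c0))
     \<inter> box_union (slab_boxes upper_boxes i c1 c0)
   = box_union (slab_boxes crossing_boxes i c1 c0)"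
proof (intro equalityI subsetI)
  fix x assume x: "x \<in> (box_union lower_boxes \<union> box_union (slab_boxes crossing_boxes i c2 c0))
                        \<inter> box_union (slab_boxes upper_boxes i c1 c0)"
  then have "c1 < x$i"
    using slab_boxes_bounds by blast
  with x have "x \<in> box_union (slab_boxes crossing_boxes i c2 c0)"
    by (auto simp: box_union_lower_boxes)
  with \<open>c1 < x$i\<close> show "x \<in> box_union (slab_boxes crossing_boxes i c1 c0)"
    using slab_boxes_bounds by (blast intro: box_union_slab_boxes_rebound)
next
  fix x assume x: "x \<in> box_union (slab_boxes crossing_boxes i c1 c0)"
  then have "c1 < x$i" "x$i < c0"
    using slab_boxes_bounds by blast+
  then have "x \<in> box_union (slab_boxes crossing_boxes i c2 c0)"
    using x c2_less_c1 by (auto intro: box_union_slab_boxes_rebound)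
  moreover have "x \<in> box_union (slab_boxes upper_boxes i c1 c0)"
    using calculation box_union_crossing_slab_subset[of c2 c0] \<open>c1 < x$i\<close>
    by (auto simp: box_union_upper_slab)
  ultimately show "x \<in> (box_union lower_boxes \<union> box_union (slab_boxes crossing_boxes i c2 c0))
                        \<inter> box_union (slab_boxes upper_boxes i c1 c0)"
    by blast
qed

lemma box_union_split:
  "box_union lower_boxes \<union> box_union (slab_boxes crossing_boxes i c2 c0)
     \<union> box_union (slab_boxes upper_boxes i c1 c0) = box_union F"
proof (intro equalityI subsetI)
  fix x assume "x \<in> box_union lower_boxes \<union> box_union (slab_boxes crossing_boxes i c2 c0)
                       \<union> box_union (slab_boxes upper_boxes i c1 c0)"
  then show "x \<in> box_union F"
    using box_union_crossing_slab_subset[of c2 c0]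
    by (auto simp: box_union_lower_boxes box_union_upper_slab)
next
  fix x assume x: "x \<in> box_union F"
  consider "x$i < c1" | "c1 < x$i" | "x$i = c1"
    by fastforce
  then show "x \<in> box_union lower_boxes \<union> box_union (slab_boxes crossing_boxes i c2 c0)
                 \<union> box_union (slab_boxes upper_boxes i c1 c0)"
  proof cases
    case 1
    then have "x \<in> box_union lower_boxes"
      using x box_union_lower_boxes by blast
    then show ?thesis by blast
  next
    case 2
    then have "x \<in> box_union (slab_boxes upper_boxes i c1 c0)"
      using x box_union_upper_slab by blast
    then show ?thesis by blast
  next
    case 3
    obtain a b where ab: "(a, b) \<in> F" and xab: "\<And>k. a$k < x$k \<and> x$k < b$k"
      using x by (auto elim!: box_unionE)
    have "(a, b) \<in> crossing_boxes"
      using ab xab[of i] 3 unfolding crossing_boxes_def by auto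
    then have "x \<in> box_union (slab_boxes crossing_boxes i c2 c0)"
      by (rule box_union_slab_boxesI) (use xab 3 c2_less_c1 c1_less_c0 in auto)
    then show ?thesis by blast
  qed
qed

lemma finite_lower_boxes: "finite F \<Longrightarrow> finite lower_boxes"
  unfolding lower_boxes_def by (rule finite_imageI, rule finite_subset[of _ F]) auto

lemma proper_lower_boxes: "proper_boxes F \<Longrightarrow> proper_boxes lower_boxes"
  unfolding proper_boxes_def lower_boxes_def by auto

lemma boxes_vary_only_in_lower_boxes:
  assumes "boxes_vary_only_in D F" "i \<in> D"
  shows "boxes_vary_only_in D lower_boxes"
  unfolding boxes_vary_only_in_def
proof (clarify)
  fix a b a' b' k assume "(a, b) \<in> lower_boxes" "(a', b') \<in> lower_boxes" "k \<notin> D"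
  then obtain b0 b0' where "(a, b0) \<in> F" "(a', b0') \<in> F"
    and b: "b = cart_upd b0 i (min (b0$i) c1)" "b' = cart_upd b0' i (min (b0'$i) c1)"
    unfolding lower_boxes_def by auto
  then have "a$k = a'$k \<and> b0$k = b0'$k"
    using boxes_vary_only_inD[OF assms(1)] \<open>k \<notin> D\<close> by blast
  moreover have "k \<noteq> i"
    using \<open>k \<notin> D\<close> assms(2) by auto
  ultimately show "a$k = a'$k \<and> b$k = b'$k"
    unfolding b by simp
qed

lemma box_ends_lower_boxes: "box_ends lower_boxes i \<subseteq> insert c1 (box_ends F i) - {c0}"
proof
  fix e assume "e \<in> box_ends lower_boxes i"
  then obtain a b where ab: "(a, b) \<in> F" "a$i < c1" and "e = a$i \<or> e = min (b$i) c1"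
    unfolding box_ends_def lower_boxes_def by auto
  then show "e \<in> insert c1 (box_ends F i) - {c0}"
    using box_endsI[OF ab(1)] c1_less_c0 by (auto simp: min_def split: if_splits)
qed

lemma card_box_ends_lower_boxes:
  assumes "finite F" "c0 \<in> box_ends F i" "c1 \<in> box_ends F i"
  shows "card (box_ends lower_boxes i) < card (box_ends F i)"
proof -
  have "finite (box_ends F i)"
    using \<open>finite F\<close> by (rule finite_box_ends)
  then have "card (box_ends lower_boxes i) \<le> card (insert c1 (box_ends F i) - {c0})"
    by (intro card_mono box_ends_lower_boxes) auto
  also have "\<dots> = card (box_ends F i) - 1"
    using assms(2,3) by (simp add: insert_absorb)
  also have "\<dots> < card (box_ends F i)"
    using assms(2) \<open>finite (box_ends F i)\<close> card_gt_0_iff by (metis diff_less empty_iff zero_less_one)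
  finally show ?thesis .
qed

lemma trivial_reduced_homology_group_box_union_split:
  assumes "p \<noteq> 0"
    and lower: "trivial_group (reduced_homology_group p (top_of_set (box_union lower_boxes)))"
    and slabs: "\<And>G \<alpha> \<beta> q. G \<subseteq> F \<Longrightarrow> \<alpha> < \<beta> \<Longrightarrow> q \<in> {p - 1, p} \<Longrightarrow>
      trivial_group (reduced_homology_group q (top_of_set (box_union (slab_boxes G i \<alpha> \<beta>))))"
  shows "trivial_group (reduced_homology_group p (top_of_set (box_union F)))"
proof -
  have sub: "crossing_boxes \<subseteq> F" "upper_boxes \<subseteq> F"
    unfolding crossing_boxes_def upper_boxes_def by auto
  let ?L = "box_union lower_boxes"
  let ?C = "box_union (slab_boxes crossing_boxes i c2 c0)"
  let ?U = "box_union (slab_boxes upper_boxes i c1 c0)"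
  have "trivial_group (reduced_homology_group p (top_of_set (?L \<union> ?C)))"
  proof (rule trivial_reduced_homology_group_Un_open[OF open_box_union open_box_union \<open>p \<noteq> 0\<close> lower])
    show "trivial_group (reduced_homology_group p (top_of_set ?C))"
      using c2_less_c1 c1_less_c0 by (intro slabs sub) auto
    show "trivial_group (reduced_homology_group (p - 1) (top_of_set (?L \<inter> ?C)))"
      unfolding box_union_lower_Int_crossing using c2_less_c1 by (intro slabs sub) auto
  qed
  then have "trivial_group (reduced_homology_group p (top_of_set (?L \<union> ?C \<union> ?U)))"
  proof (rule trivial_reduced_homology_group_Un_open[OF open_Un[OF open_box_union open_box_union] open_box_union \<open>p \<noteq> 0\<close>])
    show "trivial_group (reduced_homology_group p (top_of_set ?U))"
      using c1_less_c0 by (intro slabs sub) auto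
    show "trivial_group (reduced_homology_group (p - 1) (top_of_set ((?L \<union> ?C) \<inter> ?U)))"
      unfolding box_union_lower_crossing_Int_upper using c1_less_c0 by (intro slabs sub) auto
  qed
  then show ?thesis
    by (simp only: box_union_split)
qed

end

lemma finite_three_largest:
  fixes E :: "'a::linorder set"
  assumes "finite E" "\<not> card E \<le> 2"
  obtains c0 c1 c2 where "c0 \<in> E" "c1 \<in> E" "c2 < c1" "c1 < c0"
    "\<And>x. x \<in> E \<Longrightarrow> x \<le> c0" "\<And>x. x \<in> E \<Longrightarrow> x < c0 \<Longrightarrow> x \<le> c1"
    "\<And>x. x \<in> E \<Longrightarrow> x < c1 \<Longrightarrow> x \<le> c2"
proof -
  define c0 where "c0 = Max E"
  define c1 where "c1 = Max (E - {c0})"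
  define c2 where "c2 = Max (E - {c0, c1})"
  have small: "card E \<le> 2" if "E \<subseteq> {x, y}" for x y
  proof -
    have "card E \<le> card {x, y}"
      using that by (rule card_mono[rotated]) simp
    also have "\<dots> \<le> 2"
      by (simp add: card_insert_if)
    finally show ?thesis .
  qed
  have "E \<noteq> {}" "E - {c0} \<noteq> {}" "E - {c0, c1} \<noteq> {}"
    using assms(2) small[of c0 c0] small[of c0 c1] by auto
  with \<open>finite E\<close> have mem: "c0 \<in> E" "c1 \<in> E - {c0}" "c2 \<in> E - {c0, c1}"
    unfolding c0_def c1_def c2_def by (meson Max_in finite_Diff)+
  have le: "x \<le> c0" if "x \<in> E" for x
    unfolding c0_def using \<open>finite E\<close> that by simp
  have le1: "x \<le> c1" if "x \<in> E - {c0}" for x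
    unfolding c1_def using \<open>finite E\<close> that by simp
  have le2: "x \<le> c2" if "x \<in> E - {c0, c1}" for x
    unfolding c2_def using \<open>finite E\<close> that by simp
  have "c1 < c0" "c2 < c1"
    using le[of c1] le1[of c2] mem by auto
  then show ?thesis
    using mem le le1 le2 by (intro that) (auto, force)
qed

lemma obtain_box_split:
  assumes "finite F" "proper_boxes F" "\<not> card (box_ends F i) \<le> 2"
  obtains c0 c1 c2 where "box_split F i c0 c1 c2" "c0 \<in> box_ends F i" "c1 \<in> box_ends F i"
proof -
  obtain c0 c1 c2 where c: "c0 \<in> box_ends F i" "c1 \<in> box_ends F i" "c2 < c1" "c1 < c0"
    and le: "\<And>x. x \<in> box_ends F i \<Longrightarrow> x \<le> c0" "\<And>x. x \<in> box_ends F i \<Longrightarrow> x < c0 \<Longrightarrow> x \<le> c1"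
      "\<And>x. x \<in> box_ends F i \<Longrightarrow> x < c1 \<Longrightarrow> x \<le> c2"
    using finite_box_ends[OF assms(1)] assms(3) by (rule finite_three_largest) (rule that)
  have split: "box_split F i c0 c1 c2"
  proof
    fix a b assume ab: "(a, b) \<in> F"
    have "a$i < b$i" "a$i \<in> box_ends F i" "b$i \<in> box_ends F i"
      using proper_boxesD[OF assms(2) ab] box_endsI[OF ab] by auto
    then show "a$i \<le> c1" "a$i < c1 \<Longrightarrow> a$i \<le> c2" "c1 < b$i \<Longrightarrow> b$i = c0"
      using le by (fastforce intro: le[of "a$i"])+
  qed (use c in auto)
  show ?thesis
    using split c(1,2) by (rule that)
qed

lemma trivial_reduced_homology_group_box_union_drop_coordinate:
  fixes D :: "'n::finite set" and i :: 'n
  assumes "i \<in> D"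
    and IH: "\<And>G q. finite G \<Longrightarrow> proper_boxes G \<Longrightarrow> boxes_vary_only_in (D - {i}) G
               \<Longrightarrow> q \<ge> int (card D) - 1
               \<Longrightarrow> trivial_group (reduced_homology_group q (top_of_set (box_union G)))"
  shows "finite F \<Longrightarrow> proper_boxes F \<Longrightarrow> boxes_vary_only_in D F \<Longrightarrow> p \<ge> int (card D)
    \<Longrightarrow> trivial_group (reduced_homology_group p (top_of_set (box_union F)))"
proof (induction "card (box_ends F i)" arbitrary: F rule: less_induct)
  case less
  have card_D: "card D \<ge> 1"
    using \<open>i \<in> D\<close> card_0_eq[of D] by fastforce
  let ?E = "box_ends F i"
  show ?case
  proof (cases "card ?E \<le> 2")
    case True
    with less.prems show ?thesis
      by (intro IH boxes_vary_only_in_Diff_if_two_ends) auto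
  next
    case False
    with less.prems(1,2) obtain c0 c1 c2 where "box_split F i c0 c1 c2" "c0 \<in> ?E" "c1 \<in> ?E"
      by (rule obtain_box_split) (rule that)
    interpret box_split F i c0 c1 c2 by fact
    show ?thesis
    proof (rule trivial_reduced_homology_group_box_union_split)
      show "p \<noteq> 0"
        using less.prems(4) card_D by linarith
      show "trivial_group (reduced_homology_group q (top_of_set (box_union (slab_boxes G i \<alpha> \<beta>))))"
        if "G \<subseteq> F" "\<alpha> < \<beta>" "q \<in> {p - 1, p}" for G \<alpha> \<beta> q
        using that less.prems
        by (intro IH finite_slab_boxes proper_slab_boxes boxes_vary_only_in_slab_boxes)
           (auto intro: finite_subset proper_boxes_subset boxes_vary_only_in_subset)
      have "card (box_ends lower_boxes i) < card ?E"
        using less.prems(1) \<open>c0 \<in> ?E\<close> \<open>c1 \<in> ?E\<close> by (rule card_box_ends_lower_boxes)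
      then show "trivial_group (reduced_homology_group p (top_of_set (box_union lower_boxes)))"
        using less.prems \<open>i \<in> D\<close>
        by (intro less.hyps finite_lower_boxes proper_lower_boxes boxes_vary_only_in_lower_boxes)
    qed
  qed
qed

lemma trivial_reduced_homology_group_box_union:
  fixes D :: "'n::finite set"
  shows "finite F \<Longrightarrow> proper_boxes F \<Longrightarrow> boxes_vary_only_in D F \<Longrightarrow> p \<ge> int (card D)
    \<Longrightarrow> trivial_group (reduced_homology_group p (top_of_set (box_union F)))"
proof (induction "card D" arbitrary: D F p rule: less_induct)
  case less
  show ?case
  proof (cases "D = {}")
    case True
    then show ?thesis
      using less.prems(3) trivial_reduced_homology_group_box_union_single by blast
  next
    case False
    then obtain i where "i \<in> D" by blast
    have "card (D - {i}) < card D"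
      by (rule card_Diff1_less) (simp_all add: \<open>i \<in> D\<close>)
    show ?thesis
    proof (rule trivial_reduced_homology_group_box_union_drop_coordinate[OF \<open>i \<in> D\<close> _ less.prems])
      fix G q
      assume "finite G" "proper_boxes G" "boxes_vary_only_in (D - {i}) G" "q \<ge> int (card D) - 1"
      moreover have "int (card (D - {i})) = int (card D) - 1"
        using \<open>i \<in> D\<close> \<open>card (D - {i}) < card D\<close> by simp
      ultimately show "trivial_group (reduced_homology_group q (top_of_set (box_union G)))"
        using less.hyps[OF \<open>card (D - {i}) < card D\<close>] by simp
    qed
  qed
qed

section \<open>Homology of open subsets of Euclidean space\<close>

lemma compact_singular_simplex_image:
  assumes "singular_simplex n euclidean f"
  shows "compact (f ` standard_simplex n)"
proof -
  have "compactin (subtopology (powertop_real UNIV) (standard_simplex n)) (standard_simplex n)"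
    by (simp add: compactin_subtopology compactin_standard_simplex)
  moreover have "continuous_map (subtopology (powertop_real UNIV) (standard_simplex n)) euclidean f"
    using assms by (simp add: singular_simplex_def)
  ultimately have "compactin euclidean (f ` standard_simplex n)"
    by (rule image_compactin)
  then show ?thesis
    by simp
qed

lemma trivial_homology_group_if_compact_subsets:
  fixes S :: "'a::topological_space set"
  assumes "\<And>K. compact K \<Longrightarrow> K \<subseteq> S \<Longrightarrow>
             \<exists>T. K \<subseteq> T \<and> T \<subseteq> S \<and> trivial_group (homology_group p (top_of_set T))"
  shows "trivial_group (homology_group p (top_of_set S))"
proof (cases "p < 0")
  case False
  then obtain n where p: "p = int n"
    by (metis nonneg_int_cases not_less)
  have "x = \<one>\<^bsub>homology_group p (top_of_set S)\<^esub>"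
    if x_carrier: "x \<in> carrier (homology_group p (top_of_set S))" for x
  proof -
    obtain c where c: "singular_relcycle n (top_of_set S) {} c"
      and x: "x = homologous_rel_set n (top_of_set S) {} c"
      using x_carrier unfolding p carrier_relative_homology_group by blast
    define K where "K = (\<Union>f\<in>Poly_Mapping.keys c. f ` standard_simplex n)"
    have chain: "singular_chain n euclidean c" and "K \<subseteq> S"
      using c unfolding K_def singular_cycle singular_chain_subtopology by auto
    moreover have "compact K"
      unfolding K_def using chain
      by (intro compact_UN compact_singular_simplex_image) (auto simp: singular_chain_def)
    ultimately obtain T where "K \<subseteq> T" "T \<subseteq> S"
      and T: "trivial_group (homology_group p (top_of_set T))"
      using assms by blast
    then have "singular_relcycle n (top_of_set T) {} c"
      using c unfolding K_def singular_cycle singular_chain_subtopology by auto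
    then have "homologous_rel_set n (top_of_set T) {} c \<in> carrier (homology_group p (top_of_set T))"
      unfolding p carrier_relative_homology_group by blast
    then have "homologous_rel_set n (top_of_set T) {} c = singular_relboundary_set n (top_of_set T) {}"
      using T unfolding p trivial_group_def by (metis one_relative_homology_group singletonD)
    then have "singular_relboundary n (top_of_set S) {} c"
      using singular_boundary_mono[OF \<open>T \<subseteq> S\<close>] by (simp add: homologous_rel_set_eq_relboundary)
    then show ?thesis
      unfolding x p by (simp add: homologous_rel_set_eq_relboundary)
  qed
  then have "carrier (homology_group p (top_of_set S)) \<subseteq> {\<one>\<^bsub>homology_group p (top_of_set S)\<^esub>}"
    by blast
  then show ?thesis
    using group.trivial_group_alt[OF group_relative_homology_group] by blast
qed (simp add: trivial_homology_group)

lemma compact_subset_box_union: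
  fixes U K :: "(real^'n) set"
  assumes "open U" "compact K" "K \<subseteq> U"
  obtains F where "finite F" "proper_boxes F" "K \<subseteq> box_union F" "box_union F \<subseteq> U"
proof -
  define I where "I = {(a, b). box a b \<subseteq> U \<and> (\<forall>k. (a::real^'n)$k < b$k)}"
  have cover: "K \<subseteq> (\<Union>(a, b)\<in>I. box a b)"
  proof
    fix y assume "y \<in> K"
    then have "y \<in> U"
      using \<open>K \<subseteq> U\<close> by blast
    then obtain a b where ab: "box a b \<subseteq> U" "y \<in> box a b"
      by (metis open_contains_box[OF \<open>open U\<close>])
    then have "a$k < b$k" for k
      by (simp add: mem_box_cart) (meson less_trans)
    with ab show "y \<in> (\<Union>(a, b)\<in>I. box a b)"
      unfolding I_def by blast
  qed
  obtain F where F: "F \<subseteq> I" "finite F" "K \<subseteq> (\<Union>(a, b)\<in>F. box a b)"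
    by (rule compactE_image[OF \<open>compact K\<close> _ cover]) (auto simp: open_box)
  have "proper_boxes F"
    using \<open>F \<subseteq> I\<close> unfolding proper_boxes_def I_def by blast
  moreover have "box_union F \<subseteq> U"
    using \<open>F \<subseteq> I\<close> unfolding box_union_def I_def by blast
  moreover have "K \<subseteq> box_union F"
    using F(3) unfolding box_union_def .
  ultimately show ?thesis
    using \<open>finite F\<close> by (intro that)
qed

lemma trivial_reduced_homology_group_open_cart:
  fixes U :: "(real^'n) set"
  assumes "open U" "p \<ge> int CARD('n)"
  shows "trivial_group (reduced_homology_group p (top_of_set U))"
proof -
  have "p \<noteq> 0"
    using assms(2) by (metis of_nat_0_less_iff zero_less_card_finite not_le)
  have "trivial_group (homology_group p (top_of_set U))"
  proof (rule trivial_homology_group_if_compact_subsets)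
    fix K assume "compact K" "K \<subseteq> U"
    then obtain F where F: "finite F" "proper_boxes F" "K \<subseteq> box_union F" "box_union F \<subseteq> U"
      using compact_subset_box_union[OF \<open>open U\<close>] by blast
    have "boxes_vary_only_in UNIV F"
      by (simp add: boxes_vary_only_in_def)
    then have "trivial_group (reduced_homology_group p (top_of_set (box_union F)))"
      using F assms(2) by (intro trivial_reduced_homology_group_box_union) auto
    then show "\<exists>T. K \<subseteq> T \<and> T \<subseteq> U \<and> trivial_group (homology_group p (top_of_set T))"
      using F by (auto simp: un_reduced_homology_group[OF \<open>p \<noteq> 0\<close>])
  qed
  then show ?thesis
    by (simp add: un_reduced_homology_group[OF \<open>p \<noteq> 0\<close>])
qed

section \<open>The homological Helly theorem\<close>

lemma trivial_reduced_homology_group_INT: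
  fixes A :: "'i \<Rightarrow> (real^'n) set"
  assumes "finite I" "I \<noteq> {}" "\<And>i. i \<in> I \<Longrightarrow> open (A i)"
    and "\<And>S q. S \<subseteq> I \<Longrightarrow> S \<noteq> {} \<Longrightarrow> card S \<le> k \<Longrightarrow>
           trivial_group (reduced_homology_group q (top_of_set (\<Union>i\<in>S. A i)))"
    and "p \<ge> int CARD('n) - int k"
  shows "trivial_group (reduced_homology_group p (top_of_set (\<Inter>i\<in>I. A i)))"
  using assms(1,2,3,4,5)
proof (induction I arbitrary: A k p rule: finite_ne_induct)
  case (singleton i)
  show ?case
  proof (cases "k = 0")
    case True
    then show ?thesis
      using singleton by (simp add: trivial_reduced_homology_group_open_cart)
  next
    case False
    then show ?thesis
      using singleton.prems(2)[of "{i}"] by simp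
  qed
next
  case (insert i0 I)
  show ?case
  proof (cases "k = 0")
    case True
    have "open (\<Inter>i\<in>insert i0 I. A i)"
      using insert by (intro open_INT) auto
    with True show ?thesis
      using insert.prems(3) by (simp add: trivial_reduced_homology_group_open_cart)
  next
    case False
    have "trivial_group (reduced_homology_group p (top_of_set (\<Inter>i\<in>I. A i)))"
    proof (rule insert.IH[of A k])
      show "trivial_group (reduced_homology_group q (top_of_set (\<Union>i\<in>S. A i)))"
        if "S \<subseteq> I" "S \<noteq> {}" "card S \<le> k" for S q
        using that by (intro insert.prems(2)) auto
    qed (use insert.prems in auto)
    moreover have "trivial_group (reduced_homology_group p (top_of_set (A i0)))"
      using insert.prems(2)[of "{i0}"] False by simp
    moreover have "trivial_group (reduced_homology_group (p + 1) (top_of_set (\<Inter>i\<in>I. A i \<union> A i0)))"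
    proof (rule insert.IH[of _ "k - 1"])
      show "trivial_group (reduced_homology_group q (top_of_set (\<Union>i\<in>S. A i \<union> A i0)))"
        if "S \<subseteq> I" "S \<noteq> {}" "card S \<le> k - 1" for S q
      proof -
        have "i0 \<notin> S"
          using that(1) insert.hyps by auto
        then have "card (insert i0 S) \<le> k"
          using that(3) finite_subset[OF that(1) \<open>finite I\<close>] \<open>k \<noteq> 0\<close> by simp
        moreover have "(\<Union>i\<in>S. A i \<union> A i0) = (\<Union>i\<in>insert i0 S. A i)"
          using that(2) by auto
        ultimately show ?thesis
          using insert.prems(2)[of "insert i0 S"] that(1) by auto
      qed
    qed (use insert.prems False in auto)
    moreover have "(\<Inter>i\<in>I. A i \<union> A i0) = (\<Inter>i\<in>I. A i) \<union> A i0"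
      using insert.hyps by auto
    moreover have "open (\<Inter>i\<in>I. A i)" "open (A i0)"
      using insert by (auto intro!: open_INT)
    ultimately have "trivial_group (reduced_homology_group p (top_of_set ((\<Inter>i\<in>I. A i) \<inter> A i0)))"
      using trivial_reduced_homology_group_Int_open by metis
    then show ?thesis
      by (simp add: Int_commute)
  qed
qed

text \<open>The hypothesis \<open>cells\<close> is the case \<open>card S = 1\<close> of \<open>unions\<close>.\<close>

theorem lemma5p2:
  fixes A :: "nat \<Rightarrow> (real ^ 'n) set" and m :: nat
  assumes opn: "\<And>i. i \<in> {1..m} \<Longrightarrow> open (A i)"
    and cells: "\<And>i. i \<in> {1..m} \<Longrightarrow> homology_cell (subtopology euclidean (A i))"
    and unions: "\<And>S. S \<subseteq> {1..m} \<Longrightarrow> S \<noteq> {} \<Longrightarrow> card S \<le> CARD('n) \<Longrightarrow>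
                   homology_cell (subtopology euclidean (\<Union>i\<in>S. A i))"
  shows "(\<Inter>i\<in>{1..m}. A i) = {} \<or> homology_cell (subtopology euclidean (\<Inter>i\<in>{1..m}. A i))"
proof -
  have "trivial_group (reduced_homology_group p (top_of_set (\<Inter>i\<in>{1..m}. A i)))" for p
  proof (cases "m = 0")
    case True
    then have "contractible_space (top_of_set (\<Inter>i\<in>{1..m}. A i))"
      by (simp del: subtopology_UNIV)
    then show ?thesis
      by (rule trivial_reduced_homology_group_contractible_space)
  next
    case False
    show ?thesis
    proof (cases "p < 0")
      case False
      show ?thesis
      proof (rule trivial_reduced_homology_group_INT[where k = "CARD('n)"])
        show "trivial_group (reduced_homology_group q (top_of_set (\<Union>i\<in>S. A i)))"
          if "S \<subseteq> {1..m}" "S \<noteq> {}" "card S \<le> CARD('n)" for S q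
          using unions[OF that] by (simp add: homology_cell_def)
      qed (use opn \<open>m \<noteq> 0\<close> False in auto)
    qed (rule trivial_reduced_homology_group)
  qed
  then show ?thesis
    by (simp add: homology_cell_def)
qed

end
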